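(* Let $k'_X$ be a kernel on a set $\mathcal{X}$ with $\sup_xk'_X(x,x)\le B_{k'}^2$, let $\mathfrak{K}$ be a kernel on $\mathcal{H}_{k'_X}$ with canonical feature map $\Phi_{\mathfrak{K}}$, and let $\mathcal{B}$ be the closed ball of radius $B_{k'}$ in $\mathcal{H}_{k'_X}$. Assume that for any $u,v\in\mathcal{B}$ and unit-norm vector $e\in\mathcal{H}_{k'_X}$, the function $h_{u,v,e}:(\lambda,\mu)\in\mathbb{R}^2\mapsto\mathfrak{K}(u+\lambda e,v+\mu e)$ admits a mixed partial derivative $\partial_1\partial_2h_{u,v,e}$ at $(0,0)$ which is bounded in absolute value by a constant $C_{\mathfrak{K}}^2$ independent of $(u,v,e)$. Then $\|\Phi_{\mathfrak{K}}(u)-\Phi_{\mathfrak{K}}(v)\|\le C_{\mathfrak{K}}\|u-v\|$ for all $u,v\in\mathcal{B}$.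
   Context: The canonical feature map of $\mathfrak{K}$ is $\Phi_{\mathfrak{K}}(v)=\mathfrak{K}(v,\cdot)\in\mathcal{H}_{\mathfrak{K}}$, the RKHS of $\mathfrak{K}$. *)

theory Defs
  imports "HOL-Analysis.Analysis"
begin

definition is_kernel_on :: "'a set \<Rightarrow> ('a \<Rightarrow> 'a \<Rightarrow> real) \<Rightarrow> bool" where
  "is_kernel_on X k \<longleftrightarrow>
     (\<forall>x\<in>X. \<forall>y\<in>X. k x y = k y x) \<and>
     (\<forall>c :: ('a \<times> real) list. set (map fst c) \<subseteq> X \<longrightarrow>
        0 \<le> (\<Sum>(x,a)\<leftarrow>c. \<Sum>(y,b)\<leftarrow>c. a * b * k x y))"

text \<open>Elements of the span of the feature map, represented as finite formal
  combinations \<open>\<Sum> a_i k(x_i,.)\<close> (list of pairs (x_i, a_i)), with the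
  RKHS norm of the Moore-Aronszajn construction.\<close>
definition rkhs_norm :: "('a \<Rightarrow> 'a \<Rightarrow> real) \<Rightarrow> ('a \<times> real) list \<Rightarrow> real" where
  "rkhs_norm k c = sqrt (\<Sum>(x,a)\<leftarrow>c. \<Sum>(y,b)\<leftarrow>c. a * b * k x y)"

definition feature_map :: "('a \<Rightarrow> 'a \<Rightarrow> real) \<Rightarrow> 'a \<Rightarrow> ('a \<times> real) list" where
  "feature_map k v = [(v, 1)]"

definition rkhs_diff :: "('a \<times> real) list \<Rightarrow> ('a \<times> real) list \<Rightarrow> ('a \<times> real) list" where
  "rkhs_diff c d = c @ map (\<lambda>(x,a). (x, - a)) d"

text \<open>\<open>h\<close> admits the mixed partial derivative \<open>\<partial>_1 \<partial>_2 h\<close> at (0,0) with value D: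
  \<open>\<partial>_2 h(\<lambda>,0)\<close> exists for \<lambda> near 0 and is differentiable at \<lambda> = 0 with derivative D.\<close>
definition has_mixed_partial_at_0 :: "(real \<Rightarrow> real \<Rightarrow> real) \<Rightarrow> real \<Rightarrow> bool" where
  "has_mixed_partial_at_0 h D \<longleftrightarrow>
     (\<exists>g. (\<forall>\<^sub>F l in nhds 0. ((\<lambda>m. h l m) has_real_derivative g l) (at 0)) \<and>
          (g has_real_derivative D) (at 0))"

end

theory Submission
  imports Defs
begin

text \<open>The squared RKHS distance between \<open>\<Phi>(u)\<close> and \<open>\<Phi>(v)\<close> is the second difference
  \<open>K(u,u) - K(u,v) - K(v,u) + K(v,v)\<close> of \<open>h(\<lambda>,\<mu>) = K(v + \<lambda>e, v + \<mu>e)\<close> over the square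
  \<open>[0,\<parallel>u - v\<parallel>]\<^sup>2\<close>, where \<open>e\<close> is the unit vector pointing from \<open>v\<close> to \<open>u\<close>. Two applications
  of the mean value theorem, first in \<open>\<mu>\<close> and then in \<open>\<lambda>\<close>, write this second difference as
  \<open>\<parallel>u - v\<parallel>\<^sup>2\<close> times a value of \<open>\<partial>\<^sub>1\<partial>\<^sub>2h\<close>, which is at most \<open>C\<^sup>2\<close> because the whole segment
  lies in the convex ball.\<close>

lemma rkhs_norm_feature_map_diff:
  "rkhs_norm K (rkhs_diff (feature_map K u) (feature_map K v))
     = sqrt (K u u - K u v - K v u + K v v)"
  by (simp add: rkhs_norm_def rkhs_diff_def feature_map_def)

lemma has_mixed_partial_at_0_shiftD:
  fixes f :: "real \<Rightarrow> real \<Rightarrow> real"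
  assumes "has_mixed_partial_at_0 (\<lambda>l m. f (a + l) (b + m)) D"
  shows "(f a has_real_derivative deriv (f a) b) (at b)"
    and "((\<lambda>x. deriv (f x) b) has_real_derivative D) (at a)"
proof -
  obtain g where ev: "\<forall>\<^sub>F l in nhds 0. ((\<lambda>m. f (a + l) (b + m)) has_real_derivative g l) (at 0)"
    and g: "(g has_real_derivative D) (at 0)"
    using assms unfolding has_mixed_partial_at_0_def by blast
  have shifted: "(f (a + l) has_real_derivative g l) (at b)"
    if "((\<lambda>m. f (a + l) (b + m)) has_real_derivative g l) (at 0)" for l
    using that DERIV_shift[of "f (a + l)" "g l" 0 b] by (simp add: add.commute)
  have "(f a has_real_derivative g 0) (at b)"
    using shifted[of 0] eventually_nhds_x_imp_x[OF ev] by simp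
  then show "(f a has_real_derivative deriv (f a) b) (at b)"
    using DERIV_imp_deriv by metis
  have deriv_eq: "\<forall>\<^sub>F l in nhds 0. deriv (f (l + a)) b = g l"
    using ev by eventually_elim (metis DERIV_imp_deriv add.commute shifted)
  have "((\<lambda>l. deriv (f (l + a)) b) has_real_derivative D) (at 0)"
    using DERIV_cong_ev[OF refl deriv_eq refl] g by simp
  then show "((\<lambda>x. deriv (f x) b) has_real_derivative D) (at a)"
    using DERIV_shift[of "\<lambda>x. deriv (f x) b" D 0 a] by simp
qed

lemma second_difference_bound_mixed_partial:
  fixes f :: "real \<Rightarrow> real \<Rightarrow> real"
  assumes t: "0 < t"
    and mixed: "\<And>a b. a \<in> {0..t} \<Longrightarrow> b \<in> {0..t} \<Longrightarrow>
                  \<exists>D. has_mixed_partial_at_0 (\<lambda>l m. f (a + l) (b + m)) D \<and> \<bar>D\<bar> \<le> M"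
  shows "\<bar>f t t - f t 0 - f 0 t + f 0 0\<bar> \<le> M * t\<^sup>2"
proof -
  define G where "G a b = deriv (f a) b" for a b
  have dG2: "(f a has_real_derivative G a b) (at b)" if "a \<in> {0..t}" "b \<in> {0..t}" for a b
    using mixed[OF that] has_mixed_partial_at_0_shiftD(1) unfolding G_def by blast
  have "((\<lambda>m. f t m - f 0 m) has_real_derivative G t b - G 0 b) (at b)"
    if "b \<in> {0..t}" for b
    using that t by (intro DERIV_diff dG2) auto
  then obtain m0 where m0: "0 < m0" "m0 < t"
    and mvt2: "(f t t - f 0 t) - (f t 0 - f 0 0) = t * (G t m0 - G 0 m0)"
    using MVT2[OF t, of "\<lambda>m. f t m - f 0 m" "\<lambda>m. G t m - G 0 m"] by auto
  have "\<exists>D. ((\<lambda>x. G x m0) has_real_derivative D) (at a) \<and> \<bar>D\<bar> \<le> M" if "a \<in> {0..t}" for a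
    using mixed[OF that, of m0] m0 has_mixed_partial_at_0_shiftD(2) unfolding G_def by fastforce
  then obtain D where D: "\<And>a. a \<in> {0..t} \<Longrightarrow>
      ((\<lambda>x. G x m0) has_real_derivative D a) (at a) \<and> \<bar>D a\<bar> \<le> M"
    by metis
  obtain l0 where l0: "0 < l0" "l0 < t" and mvt1: "G t m0 - G 0 m0 = t * D l0"
    using MVT2[OF t, of "\<lambda>x. G x m0" D] D by auto
  have "\<bar>f t t - f t 0 - f 0 t + f 0 0\<bar> = t\<^sup>2 * \<bar>D l0\<bar>"
    using mvt2 mvt1 t by (simp add: abs_mult power2_eq_square algebra_simps)
  also have "\<dots> \<le> t\<^sup>2 * M"
    using D[of l0] l0 by (intro mult_left_mono) auto
  finally show ?thesis by (simp add: mult.commute)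
qed

theorem lemmaA3:
  fixes X :: "'x set"
    and k' :: "'x \<Rightarrow> 'x \<Rightarrow> real"
    and \<phi> :: "'x \<Rightarrow> 'h :: {real_inner, complete_space}"
    and B :: real
    and K :: "'h \<Rightarrow> 'h \<Rightarrow> real"
    and C :: real
  assumes k'_kernel: "is_kernel_on X k'"
    and k'_bound: "\<forall>x\<in>X. k' x x \<le> B\<^sup>2"
    and H_feature: "\<forall>x\<in>X. \<forall>y\<in>X. k' x y = inner (\<phi> x) (\<phi> y)"
    and H_dense: "closure (span (\<phi> ` X)) = UNIV"
    and K_kernel: "is_kernel_on UNIV K"
    and C_nonneg: "0 \<le> C"
    and mixed: "\<forall>u\<in>cball 0 B. \<forall>v\<in>cball 0 B. \<forall>e. norm e = 1 \<longrightarrow>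
                  (\<exists>D. has_mixed_partial_at_0 (\<lambda>l m. K (u + l *\<^sub>R e) (v + m *\<^sub>R e)) D
                       \<and> \<bar>D\<bar> \<le> C\<^sup>2)"
  shows "\<forall>u\<in>cball 0 B. \<forall>v\<in>cball 0 B.
           rkhs_norm K (rkhs_diff (feature_map K u) (feature_map K v)) \<le> C * norm (u - v)"
proof (intro ballI)
  fix u v :: 'h
  assume u: "u \<in> cball 0 B" and v: "v \<in> cball 0 B"
  show "rkhs_norm K (rkhs_diff (feature_map K u) (feature_map K v)) \<le> C * norm (u - v)"
  proof (cases "u = v")
    case True
    then show ?thesis using C_nonneg by (simp add: rkhs_norm_feature_map_diff)
  next
    case False
    define t where "t = norm (u - v)"
    define e where "e = (1 / t) *\<^sub>R (u - v)"
    have t: "0 < t" using False by (simp add: t_def)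
    have e: "norm e = 1" and u_eq: "u = v + t *\<^sub>R e"
      using t by (simp_all add: e_def t_def)
    have segment: "v + a *\<^sub>R e \<in> cball 0 B" if "a \<in> {0..t}" for a
    proof -
      have "v + a *\<^sub>R e = (1 - a / t) *\<^sub>R v + (a / t) *\<^sub>R u"
        using t by (simp add: e_def algebra_simps)
      then show ?thesis
        using convexD[OF convex_cball v u, of "1 - a / t" "a / t"] that t by auto
    qed
    have "\<exists>D. has_mixed_partial_at_0
        (\<lambda>l m. K (v + (a + l) *\<^sub>R e) (v + (b + m) *\<^sub>R e)) D \<and> \<bar>D\<bar> \<le> C\<^sup>2"
      if "a \<in> {0..t}" "b \<in> {0..t}" for a b
    proof -
      have "(\<lambda>l m. K (v + (a + l) *\<^sub>R e) (v + (b + m) *\<^sub>R e))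
          = (\<lambda>l m. K ((v + a *\<^sub>R e) + l *\<^sub>R e) ((v + b *\<^sub>R e) + m *\<^sub>R e))"
        by (simp add: scaleR_add_left add.assoc)
      then show ?thesis
        using mixed segment[OF that(1)] segment[OF that(2)] e by simp
    qed
    from second_difference_bound_mixed_partial[OF t this]
    have "\<bar>K u u - K u v - K v u + K v v\<bar> \<le> C\<^sup>2 * t\<^sup>2"
      by (simp add: u_eq)
    then have "sqrt (K u u - K u v - K v u + K v v) \<le> sqrt ((C * t)\<^sup>2)"
      by (intro real_sqrt_le_mono) (simp add: power_mult_distrib)
    then show ?thesis
      using C_nonneg t by (simp add: rkhs_norm_feature_map_diff t_def)
  qed
qed

end
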